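(* Let $\mu$ be a Radon measure on $\mathbb{R}^n$ and $\delta\in\Upsilon(\mathbb{R}^n,\mu)$. If $\bar\delta x_j=0$ ($\mu$-a.e.) for each $j=1,\dots,n$, then $\delta=0$.
   Context: For a metric space $X$ with Borel measure $\mu$, $\mathrm{Lip}_b(X)$ is the space of bounded Lipschitz functions with norm $\max(\sup|f|,L(f))$; a derivation is a linear map $\delta:\mathrm{Lip}_b(X)\to L^\infty(X,\mu)$ with $\delta(fg)=f\delta g+g\delta f$ and such that whenever a net $(f_\alpha)$ with $\sup\|f_\alpha\|_{\mathrm{Lip}}<\infty$ converges pointwise to $f$, $\delta f_\alpha\to\delta f$ weak-* in $L^\infty(X,\mu)$; $\Upsilon(X,\mu)$ is the set of derivations. For a Lipschitz (possibly unbounded) $f$ on $\mathbb{R}^n$, $\bar\delta f$ is the function with $\chi_B\bar\delta f=\chi_B\,\delta(\tilde f_B)$ for every ball $B$, where $\tilde f_B$ is any bounded Lipschitz function agreeing with $f$ on $B$ (independent of the choice by locality). $x_j$ is the $j$-th coordinate function. *)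

theory Defs
  imports "HOL-Analysis.Analysis"
begin

text \<open>Radon measure on R^n: a Borel measure that is finite on compact sets
(on R^n, locally finite Borel measures are exactly the Radon measures).\<close>
definition radon_measure :: "(real^'n) measure \<Rightarrow> bool" where
  "radon_measure M \<longleftrightarrow> sets M = sets borel \<and> (\<forall>K. compact K \<longrightarrow> emeasure M K < \<infinity>)"

definition Lipb :: "(real^'n \<Rightarrow> real) set" where
  "Lipb = {f. bounded (range f) \<and> (\<exists>C. C-lipschitz_on UNIV f)}"

definition lip_const :: "(real^'n \<Rightarrow> real) \<Rightarrow> real" where
  "lip_const f = Inf {C. C-lipschitz_on UNIV f}"

definition lip_norm :: "(real^'n \<Rightarrow> real) \<Rightarrow> real" where
  "lip_norm f = max (SUP x. \<bar>f x\<bar>) (lip_const f)"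

text \<open>A derivation: elements of L^infinity are represented by measurable, essentially
bounded functions; identities in L^infinity hold almost everywhere. Nets are represented
by filters (on the function space); weak-* convergence in L^infinity = L^1 dual is
convergence of the pairings with every integrable function.\<close>
definition derivation :: "(real^'n) measure \<Rightarrow> ((real^'n \<Rightarrow> real) \<Rightarrow> (real^'n \<Rightarrow> real)) \<Rightarrow> bool" where
  "derivation M \<delta> \<longleftrightarrow>
     (\<forall>f\<in>Lipb. \<delta> f \<in> borel_measurable M \<and> (\<exists>B. AE x in M. \<bar>\<delta> f x\<bar> \<le> B)) \<and>
     (\<forall>f\<in>Lipb. \<forall>g\<in>Lipb. \<forall>a b. AE x in M. \<delta> (\<lambda>y. a * f y + b * g y) x = a * \<delta> f x + b * \<delta> g x) \<and>
     (\<forall>f\<in>Lipb. \<forall>g\<in>Lipb. AE x in M. \<delta> (\<lambda>y. f y * g y) x = f x * \<delta> g x + g x * \<delta> f x) \<and>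
     (\<forall>F C f. (\<forall>\<^sub>F g in F. g \<in> Lipb \<and> lip_norm g \<le> C) \<longrightarrow>
        (\<forall>x. ((\<lambda>g. g x) \<longlongrightarrow> f x) F) \<longrightarrow>
        (\<forall>h. integrable M h \<longrightarrow>
           ((\<lambda>g. LINT x|M. h x * \<delta> g x) \<longlongrightarrow> (LINT x|M. h x * \<delta> f x)) F))"

text \<open>\<phi> is (a version of) \<bar>\<delta> f for a Lipschitz, possibly unbounded f:
on every ball B, \<phi> = \<delta> g a.e. on B for any bounded Lipschitz g agreeing with f on B.\<close>
definition is_bar_delta :: "(real^'n) measure \<Rightarrow> ((real^'n \<Rightarrow> real) \<Rightarrow> (real^'n \<Rightarrow> real))
    \<Rightarrow> (real^'n \<Rightarrow> real) \<Rightarrow> (real^'n \<Rightarrow> real) \<Rightarrow> bool" where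
  "is_bar_delta M \<delta> f \<phi> \<longleftrightarrow>
     (\<forall>c r. \<forall>g\<in>Lipb. (\<forall>x\<in>ball c r. g x = f x) \<longrightarrow>
        (AE x in M. x \<in> ball c r \<longrightarrow> \<phi> x = \<delta> g x))"

end

theory Submission
  imports Defs
begin

text \<open>The bounded Lipschitz \<open>f\<close> with \<open>\<delta> f = 0\<close> a.e.\ on a Borel set \<open>A\<close> contain the constants
  and are closed under linear combinations and products (Leibniz rule) and under pointwise limits
  of families with bounded Lipschitz norm (weak-* continuity, tested against
  \<open>indicator (A \<inter> ball 0 r) * sgn (\<delta> f)\<close>). Hence they are closed under
  \<open>\<bar>h\<bar> = lim sqrt (h\<^sup>2 + \<epsilon>)\<close>, \<open>min\<close> and finite \<open>Min\<close>. On each ball the coordinate \<open>x $ j\<close>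
  agrees with a bounded clamp of it, so by hypothesis every \<open>min K \<bar>x $ j - c\<bar>\<close> is in the class.
  Finally a bounded \<open>L\<close>-Lipschitz \<open>f\<close> is the pointwise limit, along finite sets \<open>S\<close>
  exhausting \<open>\<real>\<^sup>n\<close>, of the McShane-type approximants
  \<open>x \<mapsto> min over y \<in> S of f y + L \<Sum>\<^sub>j min K \<bar>x $ j - y $ j\<bar>\<close>,
  whose Lipschitz norms stay bounded.\<close>

section \<open>Bounded Lipschitz functions\<close>

lemma Lipb_iff: "f \<in> Lipb \<longleftrightarrow> (\<exists>B. \<forall>x. \<bar>f x\<bar> \<le> B) \<and> (\<exists>C. C-lipschitz_on UNIV f)"
  unfolding Lipb_def by (auto simp: bounded_real)

lemma LipbI: "(\<And>x. \<bar>f x\<bar> \<le> B) \<Longrightarrow> C-lipschitz_on UNIV f \<Longrightarrow> f \<in> Lipb"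
  unfolding Lipb_iff by blast

lemma LipbE:
  assumes "f \<in> Lipb"
  obtains B C where "\<And>x. \<bar>f x\<bar> \<le> B" "C-lipschitz_on UNIV f" "0 \<le> B" "0 < C"
proof -
  from assms obtain B C where B: "\<And>x. \<bar>f x\<bar> \<le> B" and C: "C-lipschitz_on UNIV f"
    unfolding Lipb_iff by blast
  have "(C + 1)-lipschitz_on UNIV f" using C by (rule lipschitz_on_mono) auto
  moreover have "0 \<le> B" using B[of undefined] by simp
  moreover have "0 < C + 1" using lipschitz_on_nonneg[OF C] by simp
  ultimately show ?thesis using that B by blast
qed

lemma lip_norm_le:
  assumes "C-lipschitz_on UNIV f" "\<And>x. \<bar>f x\<bar> \<le> B"
  shows "lip_norm f \<le> max B C"
proof -
  have "lip_const f \<le> C" unfolding lip_const_def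
    by (rule cInf_lower) (auto simp: assms(1) bdd_below_def intro!: exI[of _ 0] lipschitz_on_nonneg)
  moreover have "(SUP x. \<bar>f x\<bar>) \<le> B" by (rule cSUP_least) (use assms in auto)
  ultimately show ?thesis unfolding lip_norm_def by auto
qed

lemma Lipb_const: "(\<lambda>y. c) \<in> Lipb"
  by (rule LipbI[where B="\<bar>c\<bar>" and C=0]) (auto intro: lipschitz_on_constant)

lemma Lipb_linear:
  assumes "f \<in> Lipb" "g \<in> Lipb"
  shows "(\<lambda>y. a * f y + b * g y) \<in> Lipb"
proof -
  obtain B1 C1 where 1: "\<And>x. \<bar>f x\<bar> \<le> B1" "C1-lipschitz_on UNIV f" using assms(1) by (elim LipbE) blast
  obtain B2 C2 where 2: "\<And>x. \<bar>g x\<bar> \<le> B2" "C2-lipschitz_on UNIV g" using assms(2) by (elim LipbE) blast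
  have "\<bar>a * f x + b * g x\<bar> \<le> \<bar>a\<bar> * B1 + \<bar>b\<bar> * B2" for x
  proof -
    have "\<bar>a * f x + b * g x\<bar> \<le> \<bar>a\<bar> * \<bar>f x\<bar> + \<bar>b\<bar> * \<bar>g x\<bar>"
      by (simp add: abs_mult abs_triangle_ineq[THEN order_trans])
    also have "\<dots> \<le> \<bar>a\<bar> * B1 + \<bar>b\<bar> * B2" using 1 2 by (intro add_mono mult_left_mono) auto
    finally show ?thesis .
  qed
  moreover have "(\<bar>a\<bar> * C1 + \<bar>b\<bar> * C2)-lipschitz_on UNIV (\<lambda>y. a * f y + b * g y)"
    by (intro lipschitz_on_add lipschitz_on_cmult_real 1 2)
  ultimately show ?thesis by (rule LipbI)
qed

lemma Lipb_mult:
  assumes "f \<in> Lipb" "g \<in> Lipb"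
  shows "(\<lambda>y. f y * g y) \<in> Lipb"
proof -
  obtain B1 C1 where 1: "\<And>x. \<bar>f x\<bar> \<le> B1" "C1-lipschitz_on UNIV f" "0 \<le> B1"
    using assms(1) by (elim LipbE) blast
  obtain B2 C2 where 2: "\<And>x. \<bar>g x\<bar> \<le> B2" "C2-lipschitz_on UNIV g" "0 \<le> B2"
    using assms(2) by (elim LipbE) blast
  have "\<bar>f x * g x\<bar> \<le> B1 * B2" for x using 1 2 by (simp add: abs_mult mult_mono)
  moreover have "(B1 * C2 + B2 * C1)-lipschitz_on UNIV (\<lambda>y. f y * g y)"
  proof (rule lipschitz_onI)
    fix x y :: "real^'a"
    have a: "\<bar>f x - f y\<bar> \<le> C1 * dist x y" using lipschitz_onD[OF 1(2)] by (simp add: dist_real_def)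
    have b: "\<bar>g x - g y\<bar> \<le> C2 * dist x y" using lipschitz_onD[OF 2(2)] by (simp add: dist_real_def)
    have "\<bar>f x * g x - f y * g y\<bar> = \<bar>f x * (g x - g y) + g y * (f x - f y)\<bar>"
      by (simp add: algebra_simps)
    also have "\<dots> \<le> \<bar>f x\<bar> * \<bar>g x - g y\<bar> + \<bar>g y\<bar> * \<bar>f x - f y\<bar>"
      by (simp add: abs_mult abs_triangle_ineq[THEN order_trans])
    also have "\<dots> \<le> B1 * (C2 * dist x y) + B2 * (C1 * dist x y)"
      using 1 2 a b by (intro add_mono mult_mono) auto
    finally show "dist (f x * g x) (f y * g y) \<le> (B1 * C2 + B2 * C1) * dist x y"
      by (simp add: dist_real_def algebra_simps)
  qed (use 1 2 lipschitz_on_nonneg[OF 1(2)] lipschitz_on_nonneg[OF 2(2)] in auto)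
  ultimately show ?thesis by (rule LipbI)
qed

lemma Lipb_abs:
  assumes "f \<in> Lipb"
  shows "(\<lambda>y. \<bar>f y\<bar>) \<in> Lipb"
proof -
  obtain B C where B: "\<And>x. \<bar>f x\<bar> \<le> B" and C: "C-lipschitz_on UNIV f"
    using assms by (elim LipbE) blast
  have "C-lipschitz_on UNIV (\<lambda>y. \<bar>f y\<bar>)"
    using lipschitz_on_nonneg[OF C] lipschitz_onD[OF C]
    by (intro lipschitz_onI) (auto simp: dist_real_def intro: order_trans[OF abs_triangle_ineq3])
  then show ?thesis using B by (intro LipbI[where B=B]) auto
qed

lemma lipschitz_on_component:
  assumes "C-lipschitz_on UNIV g"
  shows "C-lipschitz_on UNIV (\<lambda>x::real^'n. g (x $ j))"
proof (rule lipschitz_onI)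
  fix x y :: "real^'n"
  have "dist (g (x $ j)) (g (y $ j)) \<le> C * dist (x $ j) (y $ j)"
    using lipschitz_onD[OF assms] by simp
  also have "\<dots> \<le> C * dist x y"
    using lipschitz_on_nonneg[OF assms] component_le_norm_cart[of "x - y" j]
    by (intro mult_left_mono) (auto simp: dist_norm)
  finally show "dist (g (x $ j)) (g (y $ j)) \<le> C * dist x y" .
qed (use lipschitz_on_nonneg[OF assms] in auto)

lemma derivation_measurable: "derivation M \<delta> \<Longrightarrow> f \<in> Lipb \<Longrightarrow> \<delta> f \<in> borel_measurable M"
  unfolding derivation_def by blast

lemma derivation_essentially_bounded:
  "derivation M \<delta> \<Longrightarrow> f \<in> Lipb \<Longrightarrow> \<exists>B. AE x in M. \<bar>\<delta> f x\<bar> \<le> B"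
  unfolding derivation_def by blast

lemma derivation_linear:
  "derivation M \<delta> \<Longrightarrow> f \<in> Lipb \<Longrightarrow> g \<in> Lipb \<Longrightarrow>
   AE x in M. \<delta> (\<lambda>y. a * f y + b * g y) x = a * \<delta> f x + b * \<delta> g x"
  unfolding derivation_def by blast

lemma derivation_Leibniz:
  "derivation M \<delta> \<Longrightarrow> f \<in> Lipb \<Longrightarrow> g \<in> Lipb \<Longrightarrow>
   AE x in M. \<delta> (\<lambda>y. f y * g y) x = f x * \<delta> g x + g x * \<delta> f x"
  unfolding derivation_def by blast

lemma derivation_weak_star_continuous:
  "derivation M \<delta> \<Longrightarrow> (\<forall>\<^sub>F g in F. g \<in> Lipb \<and> lip_norm g \<le> C) \<Longrightarrow>
   (\<forall>x. ((\<lambda>g. g x) \<longlongrightarrow> f x) F) \<Longrightarrow> integrable M h \<Longrightarrow>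
   ((\<lambda>g. LINT x|M. h x * \<delta> g x) \<longlongrightarrow> (LINT x|M. h x * \<delta> f x)) F"
  unfolding derivation_def by blast

section \<open>Vanishing almost everywhere\<close>

lemma AE_of_AE_on_balls:
  fixes M :: "'a::real_normed_vector measure"
  assumes "\<And>r::nat. AE x in M. x \<in> ball 0 (real r) \<longrightarrow> P x"
  shows "AE x in M. P x"
proof -
  have "AE x in M. \<forall>r::nat. x \<in> ball 0 (real r) \<longrightarrow> P x"
    using assms by (subst AE_all_countable) blast
  then show ?thesis
  proof eventually_elim
    case (elim x)
    obtain r :: nat where "norm x < real r" using reals_Archimedean2 by blast
    then show ?case using elim by auto
  qed
qed

lemma AE_zero_if_integrals_vanish:
  fixes M :: "(real^'n) measure" and \<phi> :: "real^'n \<Rightarrow> real"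
  assumes rad: "radon_measure M" and A: "A \<in> sets borel"
    and \<phi>: "\<phi> \<in> borel_measurable M" "AE x in M. \<bar>\<phi> x\<bar> \<le> B"
    and vanish: "\<And>h. integrable M h \<Longrightarrow> (\<And>x. x \<notin> A \<Longrightarrow> h x = 0) \<Longrightarrow> (LINT x|M. h x * \<phi> x) = 0"
  shows "AE x in M. x \<in> A \<longrightarrow> \<phi> x = 0"
proof (rule AE_of_AE_on_balls)
  fix r :: nat
  define S where "S = A \<inter> ball (0::real^'n) (real r)"
  have sM: "sets M = sets borel" using rad by (simp add: radon_measure_def)
  have S: "S \<in> sets M" unfolding S_def sM using A by auto
  have "emeasure M S \<le> emeasure M (cball 0 (real r))"
    by (rule emeasure_mono) (auto simp: S_def sM)
  also have "\<dots> < \<infinity>" using rad by (simp add: radon_measure_def)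
  finally have fin: "emeasure M S < \<infinity>" .
  have "integrable M (\<lambda>x. indicator S x * sgn (\<phi> x))"
    by (rule Bochner_Integration.integrable_bound[OF integrable_real_indicator[OF S fin]])
       (use S \<phi>(1) in \<open>auto simp: indicator_def abs_sgn_eq\<close>)
  then have "(LINT x|M. indicator S x * sgn (\<phi> x) * \<phi> x) = 0"
    by (rule vanish) (auto simp: S_def)
  moreover have "(\<lambda>x. indicator S x * sgn (\<phi> x) * \<phi> x) = (\<lambda>x. indicator S x * \<bar>\<phi> x\<bar>)"
    by (rule ext) (simp add: sgn_real_def)
  ultimately have integral_zero: "(LINT x|M. indicator S x * \<bar>\<phi> x\<bar>) = 0" by simp
  have "integrable M (\<lambda>x. B * indicator S x)" using S fin by simp
  moreover have "(\<lambda>x. indicator S x * \<bar>\<phi> x\<bar>) \<in> borel_measurable M" using S \<phi>(1) by measurable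
  moreover have "AE x in M. norm (indicator S x * \<bar>\<phi> x\<bar>) \<le> norm (B * indicator S x)"
    using \<phi>(2) by eventually_elim (auto simp: indicator_def)
  ultimately have "integrable M (\<lambda>x. indicator S x * \<bar>\<phi> x\<bar>)"
    by (rule Bochner_Integration.integrable_bound)
  then have "AE x in M. indicator S x * \<bar>\<phi> x\<bar> = 0"
    using integral_zero by (subst (asm) integral_nonneg_eq_0_iff_AE) auto
  then show "AE x in M. x \<in> ball 0 (real r) \<longrightarrow> x \<in> A \<longrightarrow> \<phi> x = 0"
    by eventually_elim (auto simp: S_def indicator_def)
qed

section \<open>Functions annihilated by a derivation\<close>

definition annihilated_on ::
    "(real^'n) measure \<Rightarrow> ((real^'n \<Rightarrow> real) \<Rightarrow> (real^'n \<Rightarrow> real)) \<Rightarrow> (real^'n) set \<Rightarrow> (real^'n \<Rightarrow> real) \<Rightarrow> bool"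
  where "annihilated_on M \<delta> A f \<longleftrightarrow> f \<in> Lipb \<and> (AE x in M. x \<in> A \<longrightarrow> \<delta> f x = 0)"

lemma annihilated_on_Lipb: "annihilated_on M \<delta> A f \<Longrightarrow> f \<in> Lipb"
  by (simp add: annihilated_on_def)

lemma annihilated_on_linear:
  assumes "derivation M \<delta>" "annihilated_on M \<delta> A f" "annihilated_on M \<delta> A g"
  shows "annihilated_on M \<delta> A (\<lambda>y. a * f y + b * g y)"
proof -
  have "AE x in M. \<delta> (\<lambda>y. a * f y + b * g y) x = a * \<delta> f x + b * \<delta> g x"
    using assms by (intro derivation_linear) (auto simp: annihilated_on_def)
  moreover have "AE x in M. x \<in> A \<longrightarrow> \<delta> f x = 0" "AE x in M. x \<in> A \<longrightarrow> \<delta> g x = 0"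
    using assms by (auto simp: annihilated_on_def)
  ultimately have "AE x in M. x \<in> A \<longrightarrow> \<delta> (\<lambda>y. a * f y + b * g y) x = 0"
    by eventually_elim simp
  then show ?thesis using assms by (auto simp: annihilated_on_def intro!: Lipb_linear)
qed

lemma annihilated_on_add:
  "derivation M \<delta> \<Longrightarrow> annihilated_on M \<delta> A f \<Longrightarrow> annihilated_on M \<delta> A g \<Longrightarrow>
   annihilated_on M \<delta> A (\<lambda>y. f y + g y)"
  using annihilated_on_linear[of M \<delta> A f g 1 1] by simp

lemma annihilated_on_diff:
  "derivation M \<delta> \<Longrightarrow> annihilated_on M \<delta> A f \<Longrightarrow> annihilated_on M \<delta> A g \<Longrightarrow>
   annihilated_on M \<delta> A (\<lambda>y. f y - g y)"
  using annihilated_on_linear[of M \<delta> A f g 1 "-1"] by simp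

lemma annihilated_on_cmult:
  "derivation M \<delta> \<Longrightarrow> annihilated_on M \<delta> A f \<Longrightarrow> annihilated_on M \<delta> A (\<lambda>y. c * f y)"
  using annihilated_on_linear[of M \<delta> A f f c 0] by simp

lemma annihilated_on_mult:
  assumes "derivation M \<delta>" "annihilated_on M \<delta> A f" "annihilated_on M \<delta> A g"
  shows "annihilated_on M \<delta> A (\<lambda>y. f y * g y)"
proof -
  have "AE x in M. \<delta> (\<lambda>y. f y * g y) x = f x * \<delta> g x + g x * \<delta> f x"
    using assms by (intro derivation_Leibniz) (auto simp: annihilated_on_def)
  moreover have "AE x in M. x \<in> A \<longrightarrow> \<delta> f x = 0" "AE x in M. x \<in> A \<longrightarrow> \<delta> g x = 0"
    using assms by (auto simp: annihilated_on_def)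
  ultimately have "AE x in M. x \<in> A \<longrightarrow> \<delta> (\<lambda>y. f y * g y) x = 0"
    by eventually_elim simp
  then show ?thesis using assms by (auto simp: annihilated_on_def intro!: Lipb_mult)
qed

lemma annihilated_on_const:
  assumes der: "derivation M \<delta>"
  shows "annihilated_on M \<delta> A (\<lambda>y. c)"
proof -
  have "AE x in M. \<delta> (\<lambda>y. 1) x = 1 * \<delta> (\<lambda>y. 1) x + 1 * \<delta> (\<lambda>y. 1) x"
    using derivation_Leibniz[OF der Lipb_const[of 1] Lipb_const[of 1]] by simp
  then have one: "AE x in M. \<delta> (\<lambda>y. 1) x = 0" by eventually_elim simp
  have "AE x in M. \<delta> (\<lambda>y. c) x = c * \<delta> (\<lambda>y. 1) x + 0 * \<delta> (\<lambda>y. 1) x"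
    using derivation_linear[OF der Lipb_const[of 1] Lipb_const[of 1], of c 0] by simp
  with one have "AE x in M. \<delta> (\<lambda>y. c) x = 0" by eventually_elim simp
  then show ?thesis by (auto simp: annihilated_on_def Lipb_const)
qed

lemma annihilated_on_sum:
  assumes der: "derivation M \<delta>" and "finite J" and "\<And>j. j \<in> J \<Longrightarrow> annihilated_on M \<delta> A (g j)"
  shows "annihilated_on M \<delta> A (\<lambda>x. \<Sum>j\<in>J. g j x)"
  using assms(2,3)
proof (induction J rule: finite_induct)
  case empty
  then show ?case using annihilated_on_const[OF der, of A 0] by simp
next
  case (insert a J)
  then show ?case by (simp add: annihilated_on_add der)
qed

lemma annihilated_on_limit:
  assumes der: "derivation M \<delta>" and rad: "radon_measure M" and A: "A \<in> sets borel"
    and F: "F \<noteq> bot" and ev: "\<forall>\<^sub>F g in F. annihilated_on M \<delta> A g \<and> lip_norm g \<le> C"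
    and conv: "\<forall>x. ((\<lambda>g. g x) \<longlongrightarrow> f x) F" and f: "f \<in> Lipb"
  shows "annihilated_on M \<delta> A f"
proof -
  obtain B where B: "AE x in M. \<bar>\<delta> f x\<bar> \<le> B"
    using derivation_essentially_bounded[OF der f] by blast
  have "(LINT x|M. h x * \<delta> f x) = 0" if h: "integrable M h" "\<And>x. x \<notin> A \<Longrightarrow> h x = 0" for h
  proof -
    have "\<forall>\<^sub>F g in F. g \<in> Lipb \<and> lip_norm g \<le> C"
      using ev by eventually_elim (auto simp: annihilated_on_def)
    then have lim: "((\<lambda>g. LINT x|M. h x * \<delta> g x) \<longlongrightarrow> (LINT x|M. h x * \<delta> f x)) F"
      using derivation_weak_star_continuous[OF der _ conv h(1)] by blast
    have "\<forall>\<^sub>F g in F. (LINT x|M. h x * \<delta> g x) = 0"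
      using ev
    proof eventually_elim
      case (elim g)
      then have g: "g \<in> Lipb" and "AE x in M. x \<in> A \<longrightarrow> \<delta> g x = 0"
        by (auto simp: annihilated_on_def)
      from this(2) have "AE x in M. h x * \<delta> g x = 0" by eventually_elim (use h(2) in auto)
      moreover have "(\<lambda>x. h x * \<delta> g x) \<in> borel_measurable M"
        using derivation_measurable[OF der g] h(1) by measurable
      ultimately have "(LINT x|M. h x * \<delta> g x) = (LINT x|M. 0)"
        by (intro integral_cong_AE) auto
      then show ?case by simp
    qed
    then have "((\<lambda>g. 0) \<longlongrightarrow> (LINT x|M. h x * \<delta> f x)) F"
      using lim by (rule Lim_transform_eventually[rotated])
    then show ?thesis using F by (simp add: tendsto_const_iff)
  qed
  then have "AE x in M. x \<in> A \<longrightarrow> \<delta> f x = 0"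
    using AE_zero_if_integrals_vanish[OF rad A derivation_measurable[OF der f] B] by blast
  then show ?thesis using f by (simp add: annihilated_on_def)
qed

lemma annihilated_on_of_square:
  assumes der: "derivation M \<delta>" and s: "s \<in> Lipb" "\<And>y. s y > 0"
    and "annihilated_on M \<delta> A (\<lambda>y. s y * s y)"
  shows "annihilated_on M \<delta> A s"
proof -
  have "AE x in M. \<delta> (\<lambda>y. s y * s y) x = s x * \<delta> s x + s x * \<delta> s x"
    using der s by (intro derivation_Leibniz) auto
  moreover have "AE x in M. x \<in> A \<longrightarrow> \<delta> (\<lambda>y. s y * s y) x = 0"
    using assms(4) by (simp add: annihilated_on_def)
  ultimately have "AE x in M. x \<in> A \<longrightarrow> \<delta> s x = 0"
  proof eventually_elim
    case (elim x)
    then show ?case using s(2)[of x] by auto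
  qed
  then show ?thesis using s by (simp add: annihilated_on_def)
qed

lemma abs_sqrt_square_add_diff_le:
  fixes a b e :: real
  assumes "0 \<le> e"
  shows "\<bar>sqrt (a\<^sup>2 + e) - sqrt (b\<^sup>2 + e)\<bar> \<le> \<bar>a - b\<bar>"
proof -
  have n: "sqrt (t\<^sup>2 + e) = norm (t, sqrt e)" for t using assms by (simp add: norm_Pair)
  have "\<bar>norm (a, sqrt e) - norm (b, sqrt e)\<bar> \<le> norm ((a, sqrt e) - (b, sqrt e))"
    by (rule norm_triangle_ineq3)
  also have "\<dots> = \<bar>a - b\<bar>" by (simp add: norm_Pair)
  finally show ?thesis by (simp add: n)
qed

lemma sqrt_square_add_lipschitz:
  assumes "L-lipschitz_on UNIV h" "0 \<le> e"
  shows "L-lipschitz_on UNIV (\<lambda>y. sqrt ((h y)\<^sup>2 + e))"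
proof (rule lipschitz_onI)
  fix x y
  have "dist (sqrt ((h x)\<^sup>2 + e)) (sqrt ((h y)\<^sup>2 + e)) \<le> \<bar>h x - h y\<bar>"
    unfolding dist_real_def using assms(2) by (rule abs_sqrt_square_add_diff_le)
  also have "\<dots> \<le> L * dist x y" using lipschitz_onD[OF assms(1)] by (simp add: dist_real_def)
  finally show "dist (sqrt ((h x)\<^sup>2 + e)) (sqrt ((h y)\<^sup>2 + e)) \<le> L * dist x y" .
qed (rule lipschitz_on_nonneg[OF assms(1)])

lemma sqrt_square_add_bound:
  fixes e :: real
  assumes "\<bar>t\<bar> \<le> B" "0 \<le> e"
  shows "\<bar>sqrt (t\<^sup>2 + e)\<bar> \<le> B + sqrt e"
proof -
  have "sqrt (t\<^sup>2 + e) \<le> sqrt (t\<^sup>2) + sqrt e"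
    using assms by (intro sqrt_add_le_add_sqrt) auto
  then show ?thesis using assms by simp
qed

lemma annihilated_on_sqrt_square_add:
  assumes der: "derivation M \<delta>" and h: "annihilated_on M \<delta> A h" and e: "0 < e"
  shows "annihilated_on M \<delta> A (\<lambda>y. sqrt ((h y)\<^sup>2 + e))"
proof (rule annihilated_on_of_square[OF der])
  obtain B L where "\<And>x. \<bar>h x\<bar> \<le> B" "L-lipschitz_on UNIV h"
    using annihilated_on_Lipb[OF h] by (elim LipbE) blast
  then show "(\<lambda>y. sqrt ((h y)\<^sup>2 + e)) \<in> Lipb"
    using e by (intro LipbI[where B="B + sqrt e"] sqrt_square_add_lipschitz sqrt_square_add_bound) auto
  show "sqrt ((h y)\<^sup>2 + e) > 0" for y using e by (simp add: add_nonneg_pos)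
  have "annihilated_on M \<delta> A (\<lambda>y. h y * h y + e)"
    by (intro annihilated_on_add annihilated_on_mult annihilated_on_const der h)
  then show "annihilated_on M \<delta> A (\<lambda>y. sqrt ((h y)\<^sup>2 + e) * sqrt ((h y)\<^sup>2 + e))"
    using e by (simp add: power2_eq_square add_nonneg_pos)
qed

lemma annihilated_on_abs:
  assumes der: "derivation M \<delta>" and rad: "radon_measure M" and A: "A \<in> sets borel"
    and h: "annihilated_on M \<delta> A h"
  shows "annihilated_on M \<delta> A (\<lambda>y. \<bar>h y\<bar>)"
proof -
  obtain B L where B: "\<And>x. \<bar>h x\<bar> \<le> B" and L: "L-lipschitz_on UNIV h"
    using annihilated_on_Lipb[OF h] by (elim LipbE) blast
  define s where "s k = (\<lambda>y. sqrt ((h y)\<^sup>2 + 1 / Suc k))" for k :: nat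
  show ?thesis
  proof (rule annihilated_on_limit[OF der rad A, where F="filtermap s sequentially" and C="max (B + 1) L"])
    show "filtermap s sequentially \<noteq> bot" by (simp add: filtermap_bot_iff)
    have "annihilated_on M \<delta> A (s k) \<and> lip_norm (s k) \<le> max (B + 1) L" for k
    proof
      show "annihilated_on M \<delta> A (s k)"
        unfolding s_def by (intro annihilated_on_sqrt_square_add der h) simp
      have "\<bar>s k x\<bar> \<le> B + 1" for x
      proof -
        have "\<bar>s k x\<bar> \<le> B + sqrt (1 / Suc k)"
          unfolding s_def by (intro sqrt_square_add_bound B) simp
        also have "\<dots> \<le> B + 1" by simp
        finally show ?thesis .
      qed
      then show "lip_norm (s k) \<le> max (B + 1) L"
        unfolding s_def by (intro lip_norm_le sqrt_square_add_lipschitz L) auto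
    qed
    then show "\<forall>\<^sub>F g in filtermap s sequentially. annihilated_on M \<delta> A g \<and> lip_norm g \<le> max (B + 1) L"
      by (simp add: eventually_filtermap)
    show "\<forall>x. ((\<lambda>g. g x) \<longlongrightarrow> \<bar>h x\<bar>) (filtermap s sequentially)"
    proof
      fix x
      have "(\<lambda>k. 1 / real (Suc k)) \<longlonglongrightarrow> 0" using LIMSEQ_Suc[OF lim_inverse_n'] by simp
      then have "(\<lambda>k. sqrt ((h x)\<^sup>2 + 1 / Suc k)) \<longlonglongrightarrow> sqrt ((h x)\<^sup>2 + 0)"
        by (intro tendsto_intros)
      then show "((\<lambda>g. g x) \<longlongrightarrow> \<bar>h x\<bar>) (filtermap s sequentially)"
        by (simp add: filterlim_filtermap s_def)
    qed
    show "(\<lambda>y. \<bar>h y\<bar>) \<in> Lipb" using annihilated_on_Lipb[OF h] by (rule Lipb_abs)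
  qed
qed

lemma annihilated_on_min:
  assumes der: "derivation M \<delta>" and rad: "radon_measure M" and A: "A \<in> sets borel"
    and f: "annihilated_on M \<delta> A f" and g: "annihilated_on M \<delta> A g"
  shows "annihilated_on M \<delta> A (\<lambda>y. min (f y) (g y))"
proof -
  have "annihilated_on M \<delta> A (\<lambda>y. (1/2) * ((f y + g y) - \<bar>f y - g y\<bar>))"
    by (intro annihilated_on_cmult annihilated_on_diff annihilated_on_add annihilated_on_abs
        der rad A f g)
  moreover have "(1/2) * ((f y + g y) - \<bar>f y - g y\<bar>) = min (f y) (g y)" for y
    by (simp add: min_def abs_if field_simps)
  ultimately show ?thesis by simp
qed

lemma annihilated_on_Min:
  assumes der: "derivation M \<delta>" and rad: "radon_measure M" and A: "A \<in> sets borel"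
    and "finite S" "S \<noteq> {}" and "\<And>y. y \<in> S \<Longrightarrow> annihilated_on M \<delta> A (T y)"
  shows "annihilated_on M \<delta> A (\<lambda>x. Min ((\<lambda>y. T y x) ` S))"
  using assms(4-)
proof (induction S rule: finite_ne_induct)
  case (singleton y)
  then show ?case by simp
next
  case (insert a S)
  then have "annihilated_on M \<delta> A (\<lambda>x. min (T a x) (Min ((\<lambda>y. T y x) ` S)))"
    by (intro annihilated_on_min der rad A) auto
  then show ?case using insert by simp
qed

lemma annihilated_on_UNIV_if_on_balls:
  assumes "\<And>r::nat. annihilated_on M \<delta> (ball 0 (real r)) f"
  shows "annihilated_on M \<delta> UNIV f"
  using assms AE_of_AE_on_balls[where M=M and P="\<lambda>x. \<delta> f x = 0"] unfolding annihilated_on_def by auto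

lemma annihilated_on_ball_clamped_component:
  fixes M :: "(real^'n) measure"
  assumes bar: "is_bar_delta M \<delta> (\<lambda>x. x $ j) (\<lambda>x. 0)" and "r \<le> R"
  shows "annihilated_on M \<delta> (ball 0 r) (\<lambda>x. max (-R) (min R (x $ j)))"
proof -
  define g where "g = (\<lambda>x::real^'n. max (-R) (min R (x $ j)))"
  have g: "g \<in> Lipb"
  proof (rule LipbI[where B="\<bar>R\<bar>" and C=1])
    show "\<bar>g x\<bar> \<le> \<bar>R\<bar>" for x by (auto simp: g_def max_def min_def abs_if)
    have "1-lipschitz_on UNIV (\<lambda>t::real. max (-R) (min R t))"
      by (rule lipschitz_onI) (auto simp: dist_real_def max_def min_def)
    then show "1-lipschitz_on UNIV g" unfolding g_def by (rule lipschitz_on_component)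
  qed
  moreover have "\<forall>x\<in>ball 0 r. g x = x $ j"
  proof
    fix x :: "real^'n"
    assume "x \<in> ball 0 r"
    then have "\<bar>x $ j\<bar> \<le> R" using component_le_norm_cart[of x j] assms(2) by simp
    then show "g x = x $ j" by (auto simp: g_def)
  qed
  ultimately have "AE x in M. x \<in> ball 0 r \<longrightarrow> 0 = \<delta> g x"
    using bar unfolding is_bar_delta_def by blast
  then have "annihilated_on M \<delta> (ball 0 r) g" using g by (auto simp: annihilated_on_def elim: AE_mp)
  then show ?thesis by (simp add: g_def)
qed

lemma annihilated_truncated_component_distance:
  fixes M :: "(real^'n) measure"
  assumes der: "derivation M \<delta>" and rad: "radon_measure M"
    and bar: "is_bar_delta M \<delta> (\<lambda>x. x $ j) (\<lambda>x. 0)" and K: "0 \<le> K"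
  shows "annihilated_on M \<delta> UNIV (\<lambda>x. min K \<bar>x $ j - c\<bar>)"
proof (rule annihilated_on_UNIV_if_on_balls)
  fix r :: nat
  define R where "R = real r + \<bar>c\<bar> + K"
  \<comment> \<open>where the clamp is active, both truncated distances equal \<open>K\<close>\<close>
  have "annihilated_on M \<delta> (ball 0 (real r)) (\<lambda>x. min K \<bar>max (-R) (min R (x $ j)) - c\<bar>)"
    using K by (intro annihilated_on_min annihilated_on_abs annihilated_on_diff annihilated_on_const
        annihilated_on_ball_clamped_component der rad bar) (auto simp: R_def)
  moreover have "min K \<bar>max (-R) (min R (x $ j)) - c\<bar> = min K \<bar>x $ j - c\<bar>" for x :: "real^'n"
    using K by (simp add: R_def min_def max_def abs_if)
  ultimately show "annihilated_on M \<delta> (ball 0 (real r)) (\<lambda>x. min K \<bar>x $ j - c\<bar>)" by simp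
qed

section \<open>McShane approximation\<close>

lemma lipschitz_on_sum:
  fixes f :: "'i \<Rightarrow> 'a::metric_space \<Rightarrow> real"
  assumes "finite I" "\<And>i. i \<in> I \<Longrightarrow> (C i)-lipschitz_on U (f i)" "\<And>i. i \<in> I \<Longrightarrow> 0 \<le> C i"
  shows "(\<Sum>i\<in>I. C i)-lipschitz_on U (\<lambda>x. \<Sum>i\<in>I. f i x)"
  using assms
proof (induction I rule: finite_induct)
  case empty
  then show ?case using lipschitz_on_constant[of U 0] by simp
next
  case (insert a I)
  then show ?case by (simp add: lipschitz_on_add)
qed

lemma lipschitz_on_Min:
  fixes T :: "'i \<Rightarrow> 'a::metric_space \<Rightarrow> real"
  assumes S: "finite S" "S \<noteq> {}" and T: "\<And>y. y \<in> S \<Longrightarrow> C-lipschitz_on UNIV (T y)" and C: "0 \<le> C"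
  shows "C-lipschitz_on UNIV (\<lambda>x. Min ((\<lambda>y. T y x) ` S))"
proof (rule lipschitz_onI[OF _ C])
  have one_sided: "Min ((\<lambda>y. T y x) ` S) \<le> Min ((\<lambda>y. T y x') ` S) + C * dist x x'" for x x'
  proof -
    have "Min ((\<lambda>y. T y x') ` S) \<in> (\<lambda>y. T y x') ` S" using S by (intro Min_in) auto
    then obtain y where y: "y \<in> S" "Min ((\<lambda>y. T y x') ` S) = T y x'" by auto
    have "Min ((\<lambda>y. T y x) ` S) \<le> T y x" using S y by (intro Min_le) auto
    also have "\<dots> \<le> T y x' + C * dist x x'"
      using lipschitz_onD[OF T[OF y(1)], of x x'] by (simp add: dist_real_def)
    finally show ?thesis using y by simp
  qed
  fix x x'
  show "dist (Min ((\<lambda>y. T y x) ` S)) (Min ((\<lambda>y. T y x') ` S)) \<le> C * dist x x'"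
    using one_sided[of x x'] one_sided[of x' x] by (simp add: dist_real_def dist_commute abs_le_iff)
qed

definition truncated_l1_dist :: "real \<Rightarrow> real^'n \<Rightarrow> real^'n \<Rightarrow> real" where
  "truncated_l1_dist K y x = (\<Sum>j\<in>UNIV. min K \<bar>x $ j - y $ j\<bar>)"

lemma truncated_l1_dist_nonneg: "0 \<le> K \<Longrightarrow> 0 \<le> truncated_l1_dist K y x"
  unfolding truncated_l1_dist_def by (intro sum_nonneg) auto

lemma truncated_l1_dist_le: "truncated_l1_dist K y (x::real^'n) \<le> real CARD('n) * K"
proof -
  have "truncated_l1_dist K y x \<le> (\<Sum>j\<in>(UNIV::'n set). K)"
    unfolding truncated_l1_dist_def by (intro sum_mono) auto
  then show ?thesis by simp
qed

lemma truncated_l1_dist_lipschitz: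
  "CARD('n)-lipschitz_on UNIV (truncated_l1_dist K (y::real^'n))"
proof -
  have "1-lipschitz_on UNIV (\<lambda>t. min K \<bar>t - y $ j\<bar>)" for j
    by (rule lipschitz_onI) (auto simp: dist_real_def min_def abs_if)
  then have "(\<Sum>j\<in>(UNIV::'n set). 1)-lipschitz_on UNIV (\<lambda>x. \<Sum>j\<in>UNIV. min K \<bar>x $ j - y $ j\<bar>)"
    by (intro lipschitz_on_sum lipschitz_on_component) auto
  then show ?thesis by (simp add: truncated_l1_dist_def[abs_def])
qed

lemma annihilated_truncated_l1_dist:
  fixes M :: "(real^'n) measure"
  assumes der: "derivation M \<delta>" and rad: "radon_measure M"
    and bar: "\<And>j. is_bar_delta M \<delta> (\<lambda>x. x $ j) (\<lambda>x. 0)" and K: "0 \<le> K"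
  shows "annihilated_on M \<delta> UNIV (truncated_l1_dist K y)"
  unfolding truncated_l1_dist_def[abs_def]
  by (intro annihilated_on_sum annihilated_truncated_component_distance der rad bar K) auto

text \<open>Truncating the \<open>\<ell>\<^sup>1\<close> distance at \<open>K\<close> keeps the approximants bounded; it does not
  affect the lower bound \<open>f x \<le> f y + L d(y, x)\<close> once \<open>L K \<ge> 2 sup |f|\<close>.\<close>
lemma le_add_truncated_l1_dist:
  assumes B: "\<And>x. \<bar>f x\<bar> \<le> B" and L: "L-lipschitz_on UNIV f" and LK: "2 * B \<le> L * K" and K: "0 \<le> K"
  shows "f x \<le> f y + L * truncated_l1_dist K y (x::real^'n)"
proof (cases "\<forall>j. \<bar>x $ j - y $ j\<bar> < K")
  case True
  then have "truncated_l1_dist K y x = (\<Sum>j\<in>UNIV. \<bar>(x - y) $ j\<bar>)"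
    unfolding truncated_l1_dist_def by (intro sum.cong) auto
  then have "norm (x - y) \<le> truncated_l1_dist K y x" using norm_le_l1_cart[of "x - y"] by simp
  then have "L * norm (x - y) \<le> L * truncated_l1_dist K y x"
    using lipschitz_on_nonneg[OF L] by (intro mult_left_mono)
  moreover have "f x \<le> f y + L * norm (x - y)"
    using lipschitz_onD[OF L, of x y] by (simp add: dist_real_def dist_norm)
  ultimately show ?thesis by simp
next
  case False
  then obtain j where j: "K \<le> \<bar>x $ j - y $ j\<bar>" by (auto simp: not_less)
  have "K = min K \<bar>x $ j - y $ j\<bar>" using j by simp
  also have "\<dots> \<le> truncated_l1_dist K y x"
    unfolding truncated_l1_dist_def using K by (intro member_le_sum) auto
  finally have "2 * B \<le> L * truncated_l1_dist K y x"
    using LK lipschitz_on_nonneg[OF L] by (meson mult_left_mono order_trans)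
  then show ?thesis using B[of x] B[of y] by simp
qed

definition mcshane_approx :: "(real^'n \<Rightarrow> real) \<Rightarrow> real \<Rightarrow> real \<Rightarrow> (real^'n) set \<Rightarrow> real^'n \<Rightarrow> real" where
  "mcshane_approx f L K S x = Min ((\<lambda>y. f y + L * truncated_l1_dist K y x) ` S)"

lemma mcshane_approx_eq:
  fixes L K :: real
  assumes "\<And>x. \<bar>f x\<bar> \<le> B" "L-lipschitz_on UNIV f" "2 * B \<le> L * K" "0 \<le> K"
    and "finite S" "x \<in> S"
  shows "mcshane_approx f L K S x = f x"
  unfolding mcshane_approx_def
proof (rule Min_eqI)
  show "f x \<in> (\<lambda>y. f y + L * truncated_l1_dist K y x) ` S"
    using assms(4,6) by (intro image_eqI[where x=x]) (auto simp: truncated_l1_dist_def)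
qed (use assms(5) le_add_truncated_l1_dist[OF assms(1-4)] in auto)

lemma mcshane_approx_lipschitz:
  fixes L K :: real
  assumes "finite S" "S \<noteq> {}" "0 \<le> L"
  shows "(L * CARD('n))-lipschitz_on UNIV (mcshane_approx f L K S :: real^'n \<Rightarrow> real)"
  unfolding mcshane_approx_def[abs_def] using assms
  by (intro lipschitz_on_Min lipschitz_on_add[where C=0, simplified] lipschitz_on_constant
      lipschitz_on_cmult_real_nonneg truncated_l1_dist_lipschitz) auto

lemma mcshane_approx_bound:
  fixes L K :: real
  assumes B: "\<And>x. \<bar>f x\<bar> \<le> B" and "0 \<le> L" "0 \<le> K" and S: "finite S" "S \<noteq> {}"
  shows "\<bar>mcshane_approx f L K S (x::real^'n)\<bar> \<le> B + L * (CARD('n) * K)"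
proof -
  have "mcshane_approx f L K S x \<in> (\<lambda>y. f y + L * truncated_l1_dist K y x) ` S"
    unfolding mcshane_approx_def using S by (intro Min_in) auto
  then obtain y where y: "mcshane_approx f L K S x = f y + L * truncated_l1_dist K y x" by auto
  have "0 \<le> L * truncated_l1_dist K y x"
    using assms(2) truncated_l1_dist_nonneg[OF assms(3)] by (rule mult_nonneg_nonneg)
  moreover have "L * truncated_l1_dist K y x \<le> L * (CARD('n) * K)"
    using assms(2) by (intro mult_left_mono truncated_l1_dist_le)
  ultimately show ?thesis using y B[of y] by (simp add: abs_le_iff)
qed

lemma mcshane_approx_lip_norm_le:
  fixes L K :: real
  assumes "\<And>x. \<bar>f x\<bar> \<le> B" "0 \<le> L" "0 \<le> K" "finite S" "S \<noteq> {}"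
  shows "lip_norm (mcshane_approx f L K S :: real^'n \<Rightarrow> real)
           \<le> max (B + L * (CARD('n) * K)) (L * CARD('n))"
  using assms by (intro lip_norm_le mcshane_approx_lipschitz mcshane_approx_bound)

lemma mcshane_approx_tendsto:
  fixes L K :: real
  assumes "\<And>x. \<bar>f x\<bar> \<le> B" "L-lipschitz_on UNIV f" "2 * B \<le> L * K" "0 \<le> K"
  shows "((\<lambda>S. mcshane_approx f L K S x) \<longlongrightarrow> f x) (finite_subsets_at_top UNIV)"
proof (rule tendsto_eventually)
  have "\<forall>\<^sub>F S in finite_subsets_at_top UNIV. finite S \<and> x \<in> S"
    unfolding eventually_finite_subsets_at_top by (intro exI[of _ "{x}"]) auto
  then show "\<forall>\<^sub>F S in finite_subsets_at_top UNIV. mcshane_approx f L K S x = f x"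
    by eventually_elim (use mcshane_approx_eq[OF assms] in blast)
qed

lemma annihilated_mcshane_approx:
  fixes M :: "(real^'n) measure"
  assumes der: "derivation M \<delta>" and rad: "radon_measure M"
    and bar: "\<And>j. is_bar_delta M \<delta> (\<lambda>x. x $ j) (\<lambda>x. 0)" and K: "0 \<le> K"
    and S: "finite S" "S \<noteq> {}"
  shows "annihilated_on M \<delta> UNIV (mcshane_approx f L K S)"
  unfolding mcshane_approx_def[abs_def]
  by (intro annihilated_on_Min annihilated_on_add annihilated_on_cmult annihilated_on_const
      annihilated_truncated_l1_dist der rad bar K S) auto

theorem corollary2p21:
  fixes M :: "(real^'n) measure"
    and \<delta> :: "(real^'n \<Rightarrow> real) \<Rightarrow> (real^'n \<Rightarrow> real)"
  assumes "radon_measure M"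
    and "derivation M \<delta>"
    and "\<And>j. is_bar_delta M \<delta> (\<lambda>x. x $ j) (\<lambda>x. 0)"
  shows "\<forall>f\<in>Lipb. AE x in M. \<delta> f x = 0"
proof
  note rad = assms(1) and der = assms(2) and bar = assms(3)
  fix f :: "real^'n \<Rightarrow> real"
  assume f: "f \<in> Lipb"
  obtain B L where B: "\<And>x. \<bar>f x\<bar> \<le> B" "0 \<le> B" and L: "L-lipschitz_on UNIV f" "0 < L"
    using f by (elim LipbE) blast
  define K where "K = 2 * B / L"
  have K: "0 \<le> K" "2 * B \<le> L * K" using B L by (auto simp: K_def)
  let ?F = "filtermap (mcshane_approx f L K) (finite_subsets_at_top UNIV)"
  have "annihilated_on M \<delta> UNIV f"
  proof (rule annihilated_on_limit[OF der rad _ _ _ _ f, where F="?F"])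
    have "\<forall>\<^sub>F S in finite_subsets_at_top UNIV. finite S \<and> S \<noteq> ({} :: (real^'n) set)"
      unfolding eventually_finite_subsets_at_top by (intro exI[of _ "{0}"]) auto
    then show "\<forall>\<^sub>F g in ?F. annihilated_on M \<delta> UNIV g
        \<and> lip_norm g \<le> max (B + L * (CARD('n) * K)) (L * CARD('n))"
      unfolding eventually_filtermap by (rule eventually_mono)
        (use B L K in \<open>auto intro!: annihilated_mcshane_approx mcshane_approx_lip_norm_le der rad bar\<close>)
    show "\<forall>x. ((\<lambda>g. g x) \<longlongrightarrow> f x) ?F"
      using mcshane_approx_tendsto[OF B(1) L(1) K(2,1)] by (simp add: filterlim_filtermap)
  qed (simp_all add: filtermap_bot_iff)
  then show "AE x in M. \<delta> f x = 0" by (simp add: annihilated_on_def)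
qed

end
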